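(* Assume that for $i=0,1$ the matrix $(\mathbf{X}^i)^T\mathbf{W}^i\mathbf{X}^i$ is invertible. Then $S_{d,\mathbf{w}^\lambda}$ is the unique linear subdivision scheme whose rule producing $(S\mathbf{f})_{2j+i}$ has the form $\sum_{m\in M_i} a_m f_{j+(m+i)/2}$ ($i=0,1$), which reproduces $\Pi_d$, and whose sub-masks are of the form $\mathbf{a}^i=\mathbf{W}^i\mathbf{X}^i\boldsymbol{\alpha}^i$ for some $\boldsymbol{\alpha}^i\in\mathbb{R}^{d+1}$, $i=0,1$.
   Context: Let $\phi:[0,1]\to[0,1]$ be non-increasing with $\phi(0)=1$, $\omega(x)=\phi(|x|)$ for $|x|\le1$ and $0$ otherwise, $\lambda\in(0,\infty)\setminus\mathbb{N}$, and $w^\lambda_m=\omega(m/\lambda)$, $m\in\mathbb{Z}$. Let $d\ge0$ be an integer, $\Pi_d$ the real polynomials of degree at most $d$, and $A(x)=(1,x,\ldots,x^d)^T$. For $i\in\{0,1\}$ let $M_i=\{m\in\mathbb{Z}: m\equiv i\pmod 2,\ |m|<\lambda\}$, let $\mathbf{X}^i$ be the $|M_i|\times(d+1)$ matrix whose rows are $A(m)^T$, $m\in M_i$ in increasing order, and $\mathbf{W}^i$ the diagonal matrix with diagonal $(w^\lambda_m)_{m\in M_i}$. The weighted local polynomial regression (WLPR) scheme $S_{d,\mathbf{w}^\lambda}$ maps $\mathbf{f}=(f_j)_{j\in\mathbb{Z}}$ to $(S\mathbf{f})_{2j+i}=\hat p(0)$ ($i\in\{0,1\}$, $j\in\mathbb{Z}$),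 where $\hat p$ minimizes $\sum_{m\in M_i} w^\lambda_m(f_{j+(m+i)/2}-p(m))^2$ over $p\in\Pi_d$. Under the invertibility assumption the minimizer is unique and $(S\mathbf{f})_{2j+i}=\sum_{m\in M_i}a_m f_{j+(m+i)/2}$; the sub-masks are the column vectors $\mathbf{a}^i=(a_m)_{m\in M_i}$ (in increasing order of $m$). A linear scheme $S$ reproduces $\Pi_d$ if $S\{p(2j)\}_{j\in\mathbb{Z}}=\{p(j)\}_{j\in\mathbb{Z}}$ for every $p\in\Pi_d$. *)

theory Defs
  imports Complex_Main "Jordan_Normal_Form.Matrix" "HOL-Computational_Algebra.Polynomial"
begin

definition omega :: "(real \<Rightarrow> real) \<Rightarrow> real \<Rightarrow> real" where
  "omega \<phi> x = (if \<bar>x\<bar> \<le> 1 then \<phi> \<bar>x\<bar> else 0)"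

definition wt :: "(real \<Rightarrow> real) \<Rightarrow> real \<Rightarrow> int \<Rightarrow> real" where
  "wt \<phi> lam m = omega \<phi> (of_int m / lam)"

definition Mset :: "real \<Rightarrow> int \<Rightarrow> int set" where
  "Mset lam i = {m. m mod 2 = i \<and> of_int \<bar>m\<bar> < lam}"

definition Mlist :: "real \<Rightarrow> int \<Rightarrow> int list" where
  "Mlist lam i = sorted_list_of_set (Mset lam i)"

definition Xmat :: "real \<Rightarrow> nat \<Rightarrow> int \<Rightarrow> real mat" where
  "Xmat lam d i = mat (length (Mlist lam i)) (d + 1)
      (\<lambda>(r, c). (of_int (Mlist lam i ! r)) ^ c)"

definition Wmat :: "(real \<Rightarrow> real) \<Rightarrow> real \<Rightarrow> int \<Rightarrow> real mat" where
  "Wmat \<phi> lam i = mat (length (Mlist lam i)) (length (Mlist lam i))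
      (\<lambda>(r, c). if r = c then wt \<phi> lam (Mlist lam i ! r) else 0)"

definition lin_scheme :: "real \<Rightarrow> (int \<Rightarrow> real) \<Rightarrow> (int \<Rightarrow> real) \<Rightarrow> int \<Rightarrow> real" where
  "lin_scheme lam a f k =
     (let i = k mod 2; j = k div 2 in
       (\<Sum>m\<in>Mset lam i. a m * f (j + (m + i) div 2)))"

definition submask :: "real \<Rightarrow> (int \<Rightarrow> real) \<Rightarrow> int \<Rightarrow> real vec" where
  "submask lam a i = vec (length (Mlist lam i)) (\<lambda>r. a (Mlist lam i ! r))"

definition reproduces :: "nat \<Rightarrow> ((int \<Rightarrow> real) \<Rightarrow> int \<Rightarrow> real) \<Rightarrow> bool" where
  "reproduces d S \<longleftrightarrow>
     (\<forall>p :: real poly. degree p \<le> d \<longrightarrow>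
        S (\<lambda>j. poly p (2 * of_int j)) = (\<lambda>j. poly p (of_int j)))"

definition wls_obj :: "(real \<Rightarrow> real) \<Rightarrow> real \<Rightarrow> (int \<Rightarrow> real) \<Rightarrow> int \<Rightarrow> int \<Rightarrow> real poly \<Rightarrow> real" where
  "wls_obj \<phi> lam f i j p =
     (\<Sum>m\<in>Mset lam i. wt \<phi> lam m * (f (j + (m + i) div 2) - poly p (of_int m))^2)"

definition wlpr :: "(real \<Rightarrow> real) \<Rightarrow> real \<Rightarrow> nat \<Rightarrow> (int \<Rightarrow> real) \<Rightarrow> int \<Rightarrow> real" where
  "wlpr \<phi> lam d f k =
     (let i = k mod 2; j = k div 2 in
       poly (THE p. degree p \<le> d \<and>
                (\<forall>q. degree q \<le> d \<longrightarrow> wls_obj \<phi> lam f i j p \<le> wls_obj \<phi> lam f i j q)) 0)"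

definition admissible_mask :: "(real \<Rightarrow> real) \<Rightarrow> real \<Rightarrow> nat \<Rightarrow> (int \<Rightarrow> real) \<Rightarrow> bool" where
  "admissible_mask \<phi> lam d a \<longleftrightarrow>
     reproduces d (lin_scheme lam a) \<and>
     (\<forall>i\<in>{0,1}. \<exists>\<alpha> \<in> carrier_vec (d + 1).
        submask lam a i = Wmat \<phi> lam i *\<^sub>v (Xmat lam d i *\<^sub>v \<alpha>))"

end

theory Submission
  imports Defs
begin

(*
  Fix a parity i and weigh functions on the nodes M_i by the form
  <g, h> = sum over m in M_i of w_m g(m) h(m); invertibility of X^T W X says that this
  form is nondegenerate on Pi_d. The WLPR fit p is the orthogonal projection of the data f
  onto Pi_d, characterised by the normal equations <p, q> = <f, q> for q in Pi_d.
  A sub-mask W X alpha is a = w r with r in Pi_d, and reproduction of Pi_d says exactly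
  that <r, q> = q(0) for q in Pi_d, i.e. r represents evaluation at 0. Such an r exists by
  nondegeneracy, and for any such r the rule yields sum a f = <r, f> = <r, p> = p(0),
  the WLPR value.
*)

lemma poly_eq_sum_coeff:
  fixes p :: "'a::comm_semiring_1 poly"
  assumes "degree p \<le> d"
  shows "poly p x = (\<Sum>k\<le>d. coeff p k * x ^ k)"
proof -
  have "poly p x = poly (\<Sum>k\<le>d. monom (coeff p k) k) x"
    using poly_as_sum_of_monoms'[OF assms] by simp
  then show ?thesis by (simp add: poly_sum poly_monom)
qed

definition poly_of_vec :: "'a::comm_semiring_1 vec \<Rightarrow> 'a poly" where
  "poly_of_vec v = (\<Sum>l<dim_vec v. monom (v $ l) l)"

lemma coeff_poly_of_vec: "coeff (poly_of_vec v) l = (if l < dim_vec v then v $ l else 0)"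
  by (simp add: poly_of_vec_def coeff_sum)

lemma degree_poly_of_vec: "v \<in> carrier_vec (d + 1) \<Longrightarrow> degree (poly_of_vec v) \<le> d"
  by (rule degree_le) (simp add: coeff_poly_of_vec)

lemma poly_poly_of_vec: "poly (poly_of_vec v) x = (\<Sum>l<dim_vec v. v $ l * x ^ l)"
  by (simp add: poly_of_vec_def poly_sum poly_monom)

lemma poly_of_vec_coeff: "degree p \<le> d \<Longrightarrow> poly_of_vec (vec (d + 1) (coeff p)) = p"
  by (rule poly_eqI) (simp add: coeff_poly_of_vec coeff_eq_0)

lemma invertible_mat_mult_vec_ex1:
  fixes A :: "'a::comm_ring_1 mat"
  assumes A: "A \<in> carrier_mat n n" and inv: "invertible_mat A" and y: "y \<in> carrier_vec n"
  shows "\<exists>!x. x \<in> carrier_vec n \<and> A *\<^sub>v x = y"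
proof -
  obtain B where AB: "A * B = 1\<^sub>m n" and BA: "B * A = 1\<^sub>m (dim_row B)"
    using inv A unfolding invertible_mat_def inverts_mat_def by auto
  have B: "B \<in> carrier_mat n n"
    using arg_cong[OF AB, of dim_col] arg_cong[OF BA, of dim_col] A by auto
  show ?thesis
  proof (rule ex1I[of _ "B *\<^sub>v y"])
    show "B *\<^sub>v y \<in> carrier_vec n \<and> A *\<^sub>v (B *\<^sub>v y) = y"
      using A B y AB by (simp flip: assoc_mult_mat_vec)
  next
    fix x assume x: "x \<in> carrier_vec n \<and> A *\<^sub>v x = y"
    then have "B *\<^sub>v y = (B * A) *\<^sub>v x" using A B by simp
    then show "x = B *\<^sub>v y" using BA B x by simp
  qed
qed

definition exact_at_0 :: "nat \<Rightarrow> 'a set \<Rightarrow> ('a \<Rightarrow> real) \<Rightarrow> ('a \<Rightarrow> real) \<Rightarrow> bool" where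
  "exact_at_0 d M node a \<longleftrightarrow>
     (\<forall>q. degree q \<le> d \<longrightarrow> (\<Sum>m\<in>M. a m * poly q (node m)) = poly q 0)"

lemma exact_at_0_cong: "(\<And>m. m \<in> M \<Longrightarrow> a m = b m) \<Longrightarrow> exact_at_0 d M node a = exact_at_0 d M node b"
  by (simp add: exact_at_0_def cong: sum.cong_simp)

locale poly_wls =
  fixes M :: "'a set" and node :: "'a \<Rightarrow> real" and w :: "'a \<Rightarrow> real" and d :: nat
  assumes finite_nodes: "finite M"
    and weights_nonneg: "\<And>m. m \<in> M \<Longrightarrow> 0 \<le> w m"
    \<comment> \<open>invertibility of the Gram matrix of the monomials \<open>1, x, \<dots>, x\<^sup>d\<close>\<close>
    and moments_bij: "\<And>y. \<exists>!p. degree p \<le> d \<and>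
       (\<forall>k\<le>d. (\<Sum>m\<in>M. w m * poly p (node m) * node m ^ k) = y k)"
begin

definition wprod :: "('a \<Rightarrow> real) \<Rightarrow> ('a \<Rightarrow> real) \<Rightarrow> real" where
  "wprod g h = (\<Sum>m\<in>M. w m * g m * h m)"

abbreviation at_nodes :: "real poly \<Rightarrow> 'a \<Rightarrow> real" where
  "at_nodes p \<equiv> \<lambda>m. poly p (node m)"

definition lsq_error :: "('a \<Rightarrow> real) \<Rightarrow> real poly \<Rightarrow> real" where
  "lsq_error F p = (\<Sum>m\<in>M. w m * (F m - poly p (node m))\<^sup>2)"

definition lsq_fit :: "('a \<Rightarrow> real) \<Rightarrow> real poly" where
  "lsq_fit F = (THE p. degree p \<le> d \<and> (\<forall>q. degree q \<le> d \<longrightarrow> lsq_error F p \<le> lsq_error F q))"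

lemma wprod_commute: "wprod g h = wprod h g"
  by (simp add: wprod_def mult_ac)

lemma wprod_diff_left: "wprod (\<lambda>m. g m - g' m) h = wprod g h - wprod g' h"
  by (simp add: wprod_def algebra_simps sum_subtractf)

lemma wprod_self_nonneg: "0 \<le> wprod g g"
  unfolding wprod_def by (intro sum_nonneg) (simp add: weights_nonneg mult.assoc)

lemma wprod_poly_right:
  assumes "degree q \<le> d"
  shows "wprod g (at_nodes q) = (\<Sum>k\<le>d. coeff q k * wprod g (\<lambda>m. node m ^ k))"
proof -
  have "wprod g (at_nodes q) = (\<Sum>m\<in>M. \<Sum>k\<le>d. coeff q k * (w m * g m * node m ^ k))"
    unfolding wprod_def poly_eq_sum_coeff[OF assms] by (simp add: sum_distrib_left mult_ac)
  also have "\<dots> = (\<Sum>k\<le>d. coeff q k * wprod g (\<lambda>m. node m ^ k))"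
    unfolding wprod_def by (subst sum.swap) (simp add: sum_distrib_left)
  finally show ?thesis .
qed

lemma representer_exists:
  "\<exists>r. degree r \<le> d \<and>
     (\<forall>q. degree q \<le> d \<longrightarrow> wprod (at_nodes r) (at_nodes q) = (\<Sum>k\<le>d. coeff q k * y k))"
proof -
  obtain r where "degree r \<le> d" and moments: "\<forall>k\<le>d. wprod (at_nodes r) (\<lambda>m. node m ^ k) = y k"
    using moments_bij[of y] unfolding wprod_def by blast
  then show ?thesis by (auto simp: wprod_poly_right intro!: sum.cong)
qed

lemma projection_exists:
  "\<exists>p. degree p \<le> d \<and> (\<forall>q. degree q \<le> d \<longrightarrow> wprod (at_nodes p) (at_nodes q) = wprod F (at_nodes q))"
proof -
  obtain p where "degree p \<le> d" and p: "\<forall>q. degree q \<le> d \<longrightarrow>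
      wprod (at_nodes p) (at_nodes q) = (\<Sum>k\<le>d. coeff q k * wprod F (\<lambda>m. node m ^ k))"
    using representer_exists[of "\<lambda>k. wprod F (\<lambda>m. node m ^ k)"] by blast
  moreover have "wprod (at_nodes p) (at_nodes q) = wprod F (at_nodes q)" if "degree q \<le> d" for q
    using p that wprod_poly_right[OF that, of F] by simp
  ultimately show ?thesis by blast
qed

lemma eval_0_representer_exists:
  "\<exists>r. degree r \<le> d \<and> (\<forall>q. degree q \<le> d \<longrightarrow> wprod (at_nodes r) (at_nodes q) = poly q 0)"
  using representer_exists[of "\<lambda>k. if k = 0 then 1 else 0"]
  by (simp add: poly_0_coeff_0 if_distrib cong: if_cong)

lemma wprod_self_eq_0D:
  assumes "degree u \<le> d" and "wprod (at_nodes u) (at_nodes u) = 0"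
  shows "u = 0"
proof -
  have "\<forall>m\<in>M. w m * poly u (node m) * poly u (node m) = 0"
    using assms(2) unfolding wprod_def
    by (subst (asm) sum_nonneg_eq_0_iff) (auto simp: finite_nodes weights_nonneg mult.assoc)
  then have "\<forall>m\<in>M. w m * poly u (node m) = 0" by simp
  then have "\<forall>k\<le>d. (\<Sum>m\<in>M. w m * poly u (node m) * node m ^ k) = 0"
    by (auto intro!: sum.neutral)
  moreover have "\<forall>k\<le>d. (\<Sum>m\<in>M. w m * poly 0 (node m) * node m ^ k) = 0" by simp
  ultimately show "u = 0" using moments_bij[of "\<lambda>_. 0"] assms(1) by auto
qed

context
  fixes F :: "'a \<Rightarrow> real" and p :: "real poly"
  assumes deg_p: "degree p \<le> d"
    and normal_eqs: "\<And>q. degree q \<le> d \<Longrightarrow> wprod (at_nodes p) (at_nodes q) = wprod F (at_nodes q)"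
begin

lemma lsq_error_decomp:
  assumes "degree q \<le> d"
  shows "lsq_error F q = lsq_error F p + wprod (at_nodes (p - q)) (at_nodes (p - q))"
proof -
  have "degree (p - q) \<le> d" using deg_p assms by (simp add: degree_diff_le)
  then have "wprod (at_nodes p) (at_nodes (p - q)) = wprod F (at_nodes (p - q))"
    by (rule normal_eqs)
  then have orth: "wprod (\<lambda>m. F m - poly p (node m)) (at_nodes (p - q)) = 0"
    by (simp add: wprod_diff_left)
  have pointwise: "w m * (F m - poly q (node m))\<^sup>2 = w m * (F m - poly p (node m))\<^sup>2
      + 2 * (w m * (F m - poly p (node m)) * poly (p - q) (node m))
      + w m * poly (p - q) (node m) * poly (p - q) (node m)" for m
    by (simp add: power2_eq_square algebra_simps)
  have "lsq_error F q = lsq_error F p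
      + 2 * wprod (\<lambda>m. F m - poly p (node m)) (at_nodes (p - q)) + wprod (at_nodes (p - q)) (at_nodes (p - q))"
    by (simp only: lsq_error_def wprod_def pointwise sum.distrib sum_distrib_left)
  then show ?thesis using orth by simp
qed

lemma lsq_fit_eqI: "lsq_fit F = p"
  unfolding lsq_fit_def
proof (rule the_equality)
  have "lsq_error F p \<le> lsq_error F q" if "degree q \<le> d" for q
    using lsq_error_decomp[OF that] wprod_self_nonneg[of "at_nodes (p - q)"] by linarith
  then show "degree p \<le> d \<and> (\<forall>q. degree q \<le> d \<longrightarrow> lsq_error F p \<le> lsq_error F q)"
    using deg_p by blast
next
  fix p' assume p': "degree p' \<le> d \<and> (\<forall>q. degree q \<le> d \<longrightarrow> lsq_error F p' \<le> lsq_error F q)"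
  then have "lsq_error F p' \<le> lsq_error F p" using deg_p by blast
  then have "wprod (at_nodes (p - p')) (at_nodes (p - p')) = 0"
    using lsq_error_decomp[of p'] p' wprod_self_nonneg[of "at_nodes (p - p')"] by linarith
  moreover have "degree (p - p') \<le> d" using deg_p p' by (simp add: degree_diff_le)
  ultimately show "p' = p" using wprod_self_eq_0D by fastforce
qed

end

lemma exact_weighted_rule_exists:
  "\<exists>r. degree r \<le> d \<and> exact_at_0 d M node (\<lambda>m. w m * poly r (node m))"
  using eval_0_representer_exists unfolding exact_at_0_def wprod_def by auto

lemma poly_lsq_fit_0:
  assumes exact: "exact_at_0 d M node a" and deg_r: "degree r \<le> d"
    and a: "\<And>m. m \<in> M \<Longrightarrow> a m = w m * poly r (node m)"
  shows "poly (lsq_fit F) 0 = (\<Sum>m\<in>M. a m * F m)"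
proof -
  obtain p where deg_p: "degree p \<le> d"
    and normal_eqs: "\<And>q. degree q \<le> d \<Longrightarrow> wprod (at_nodes p) (at_nodes q) = wprod F (at_nodes q)"
    using projection_exists[of F] by blast
  have mask_sum: "(\<Sum>m\<in>M. a m * g m) = wprod (at_nodes r) g" for g
    unfolding wprod_def using a by (intro sum.cong) auto
  have "(\<Sum>m\<in>M. a m * F m) = wprod (at_nodes p) (at_nodes r)"
    using normal_eqs[OF deg_r] by (simp add: mask_sum wprod_commute)
  also have "\<dots> = (\<Sum>m\<in>M. a m * poly p (node m))"
    by (simp add: wprod_commute mask_sum)
  also have "\<dots> = poly p 0"
    using exact deg_p by (simp add: exact_at_0_def)
  finally show ?thesis using lsq_fit_eqI[OF deg_p normal_eqs] by simp
qed

end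

lemma Mset_mod: "m \<in> Mset lam i \<Longrightarrow> m mod 2 = i"
  by (simp add: Mset_def)

lemma finite_Mset: "finite (Mset lam i)"
proof (rule finite_subset)
  show "Mset lam i \<subseteq> {-\<lceil>lam\<rceil>..\<lceil>lam\<rceil>}"
  proof
    fix m assume "m \<in> Mset lam i"
    then have "real_of_int \<bar>m\<bar> < lam" by (simp add: Mset_def)
    then have "\<bar>m\<bar> < \<lceil>lam\<rceil>" by (meson le_of_int_ceiling less_le_trans of_int_less_iff)
    then show "m \<in> {-\<lceil>lam\<rceil>..\<lceil>lam\<rceil>}" by auto
  qed
qed simp

lemma lin_scheme_poly_samples:
  "lin_scheme lam a (\<lambda>j. poly p (2 * of_int j)) k
     = (\<Sum>m\<in>Mset lam (k mod 2). a m * poly p (of_int (k + m)))"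
proof -
  have sample: "poly p (2 * of_int (k div 2 + (m + k mod 2) div 2)) = poly p (of_int (k + m))"
    if "m \<in> Mset lam (k mod 2)" for m
  proof -
    have "2 * (k div 2 + (m + k mod 2) div 2) = k + m"
      using Mset_mod[OF that] by presburger
    then show ?thesis by (metis of_int_mult of_int_numeral)
  qed
  show ?thesis
    unfolding lin_scheme_def Let_def by (rule sum.cong[OF refl]) (simp only: sample)
qed

lemma reproduces_lin_scheme_iff:
  "reproduces d (lin_scheme lam a) \<longleftrightarrow> (\<forall>i\<in>{0, 1}. exact_at_0 d (Mset lam i) of_int a)"
proof
  assume rep: "reproduces d (lin_scheme lam a)"
  show "\<forall>i\<in>{0, 1}. exact_at_0 d (Mset lam i) of_int a"
    unfolding exact_at_0_def
  proof (intro ballI allI impI)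
    fix i :: int and q :: "real poly" assume i: "i \<in> {0, 1}" and q: "degree q \<le> d"
    let ?p = "pcompose q [:- of_int i, 1:]"
    have "degree ?p \<le> d" using q by (simp add: degree_pcompose)
    then have "lin_scheme lam a (\<lambda>j. poly ?p (2 * of_int j)) i = poly ?p (of_int i)"
      using rep[unfolded reproduces_def, rule_format] by simp
    moreover have "i mod 2 = i" using i by auto
    then have "lin_scheme lam a (\<lambda>j. poly ?p (2 * of_int j)) i
        = (\<Sum>m\<in>Mset lam i. a m * poly q (of_int m))"
      unfolding lin_scheme_poly_samples by (simp add: poly_pcompose)
    ultimately show "(\<Sum>m\<in>Mset lam i. a m * poly q (of_int m)) = poly q 0"
      by (simp add: poly_pcompose)
  qed
next
  assume exact: "\<forall>i\<in>{0, 1}. exact_at_0 d (Mset lam i) of_int a"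
  show "reproduces d (lin_scheme lam a)"
    unfolding reproduces_def
  proof (intro allI impI ext)
    fix p :: "real poly" and k :: int assume p: "degree p \<le> d"
    let ?q = "pcompose p [:of_int k, 1:]"
    have "k mod 2 \<in> {0, 1}" by auto
    then have "exact_at_0 d (Mset lam (k mod 2)) of_int a" by (rule bspec[OF exact])
    moreover have "degree ?q \<le> d" using p by (simp add: degree_pcompose)
    ultimately have "(\<Sum>m\<in>Mset lam (k mod 2). a m * poly ?q (of_int m)) = poly ?q 0"
      unfolding exact_at_0_def by blast
    then show "lin_scheme lam a (\<lambda>j. poly p (2 * of_int j)) k = poly p (of_int k)"
      unfolding lin_scheme_poly_samples by (simp add: poly_pcompose add.commute)
  qed
qed

lemma set_Mlist: "set (Mlist lam i) = Mset lam i"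
  and distinct_Mlist: "distinct (Mlist lam i)"
  using finite_Mset by (auto simp: Mlist_def)

lemma sum_Mlist: "(\<Sum>r<length (Mlist lam i). g (Mlist lam i ! r)) = (\<Sum>m\<in>Mset lam i. g m)"
  using bij_betw_nth[OF distinct_Mlist] set_Mlist by (auto intro: sum.reindex_bij_betw)

lemma Xmat_mult_vec:
  assumes "v \<in> carrier_vec (d + 1)"
  shows "Xmat lam d i *\<^sub>v v
     = vec (length (Mlist lam i)) (\<lambda>r. poly (poly_of_vec v) (of_int (Mlist lam i ! r)))"
  using assms by (intro eq_vecI)
    (auto simp: Xmat_def scalar_prod_def poly_poly_of_vec atLeast0LessThan mult.commute intro!: sum.cong)

lemma Wmat_mult_vec:
  "Wmat \<phi> lam i *\<^sub>v vec (length (Mlist lam i)) g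
     = vec (length (Mlist lam i)) (\<lambda>r. wt \<phi> lam (Mlist lam i ! r) * g r)"
proof (intro eq_vecI)
  fix r assume "r < dim_vec (vec (length (Mlist lam i)) (\<lambda>r. wt \<phi> lam (Mlist lam i ! r) * g r))"
  then have r: "r < length (Mlist lam i)" by simp
  then have "(Wmat \<phi> lam i *\<^sub>v vec (length (Mlist lam i)) g) $ r
      = (\<Sum>c<length (Mlist lam i). (if r = c then wt \<phi> lam (Mlist lam i ! r) else 0) * g c)"
    by (simp add: Wmat_def scalar_prod_def atLeast0LessThan)
  also have "\<dots> = (\<Sum>c<length (Mlist lam i). if r = c then wt \<phi> lam (Mlist lam i ! r) * g c else 0)"
    by (intro sum.cong) auto
  also have "\<dots> = wt \<phi> lam (Mlist lam i ! r) * g r"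
    using r by simp
  finally show "(Wmat \<phi> lam i *\<^sub>v vec (length (Mlist lam i)) g) $ r
      = vec (length (Mlist lam i)) (\<lambda>r. wt \<phi> lam (Mlist lam i ! r) * g r) $ r"
    using r by simp
qed (simp add: Wmat_def)

lemma transpose_Xmat_mult_vec:
  "transpose_mat (Xmat lam d i) *\<^sub>v vec (length (Mlist lam i)) (\<lambda>r. g (Mlist lam i ! r))
     = vec (d + 1) (\<lambda>k. \<Sum>m\<in>Mset lam i. g m * of_int m ^ k)"
  by (intro eq_vecI)
    (auto simp: Xmat_def scalar_prod_def atLeast0LessThan mult.commute sum_Mlist[symmetric]
      intro!: sum.cong)

lemma Xmat_carrier: "Xmat lam d i \<in> carrier_mat (length (Mlist lam i)) (d + 1)"
  by (simp add: Xmat_def)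

lemma Wmat_carrier: "Wmat \<phi> lam i \<in> carrier_mat (length (Mlist lam i)) (length (Mlist lam i))"
  by (simp add: Wmat_def)

lemma gram_carrier:
  "transpose_mat (Xmat lam d i) * Wmat \<phi> lam i * Xmat lam d i \<in> carrier_mat (d + 1) (d + 1)"
  using Xmat_carrier Wmat_carrier by (intro mult_carrier_mat) (auto simp del: One_nat_def)

lemma gram_mult_vec:
  assumes v: "v \<in> carrier_vec (d + 1)"
  shows "(transpose_mat (Xmat lam d i) * Wmat \<phi> lam i * Xmat lam d i) *\<^sub>v v
     = vec (d + 1) (\<lambda>k. \<Sum>m\<in>Mset lam i. wt \<phi> lam m * poly (poly_of_vec v) (of_int m) * of_int m ^ k)"
proof -
  have Xt: "transpose_mat (Xmat lam d i) \<in> carrier_mat (d + 1) (length (Mlist lam i))"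
    using Xmat_carrier by simp
  have "(transpose_mat (Xmat lam d i) * Wmat \<phi> lam i * Xmat lam d i) *\<^sub>v v
      = transpose_mat (Xmat lam d i) *\<^sub>v (Wmat \<phi> lam i *\<^sub>v (Xmat lam d i *\<^sub>v v))"
    using assoc_mult_mat_vec[OF mult_carrier_mat[OF Xt Wmat_carrier] Xmat_carrier v]
      assoc_mult_mat_vec[OF Xt Wmat_carrier mult_mat_vec_carrier[OF Xmat_carrier v]] by simp
  also have "\<dots> = vec (d + 1) (\<lambda>k. \<Sum>m\<in>Mset lam i. wt \<phi> lam m * poly (poly_of_vec v) (of_int m) * of_int m ^ k)"
    unfolding Xmat_mult_vec[OF v] Wmat_mult_vec
    using transpose_Xmat_mult_vec[of lam d i "\<lambda>m. wt \<phi> lam m * poly (poly_of_vec v) (of_int m)"] by simp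
  finally show ?thesis .
qed

lemma poly_wls_Mset:
  assumes weights_nonneg: "\<And>m. 0 \<le> wt \<phi> lam m"
    and inv: "invertible_mat (transpose_mat (Xmat lam d i) * Wmat \<phi> lam i * Xmat lam d i)"
  shows "poly_wls (Mset lam i) of_int (wt \<phi> lam) d"
proof
  fix y :: "nat \<Rightarrow> real"
  let ?G = "transpose_mat (Xmat lam d i) * Wmat \<phi> lam i * Xmat lam d i"
  let ?moment = "\<lambda>p k. \<Sum>m\<in>Mset lam i. wt \<phi> lam m * poly p (of_int m) * of_int m ^ k"
  have G_coeff: "?G *\<^sub>v vec (d + 1) (coeff p) = vec (d + 1) (?moment p)" if "degree p \<le> d" for p
    using gram_mult_vec[of "vec (d + 1) (coeff p)"] poly_of_vec_coeff[OF that] by simp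
  obtain x where x: "x \<in> carrier_vec (d + 1)" "?G *\<^sub>v x = vec (d + 1) y"
    and x_unique: "\<And>x'. x' \<in> carrier_vec (d + 1) \<Longrightarrow> ?G *\<^sub>v x' = vec (d + 1) y \<Longrightarrow> x' = x"
    using invertible_mat_mult_vec_ex1[OF gram_carrier inv, of "vec (d + 1) y"] by auto
  have solves_iff: "(\<forall>k\<le>d. ?moment p k = y k) \<longleftrightarrow> ?G *\<^sub>v vec (d + 1) (coeff p) = vec (d + 1) y"
    if "degree p \<le> d" for p
    unfolding G_coeff[OF that] by (auto simp: vec_eq_iff)
  show "\<exists>!p. degree p \<le> d \<and> (\<forall>k\<le>d. ?moment p k = y k)"
  proof (rule ex_ex1I)
    have "degree (poly_of_vec x) \<le> d" by (rule degree_poly_of_vec[OF x(1)])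
    moreover have "\<forall>k\<le>d. ?moment (poly_of_vec x) k = y k"
      using x gram_mult_vec[OF x(1), of lam i \<phi>] by (auto simp: vec_eq_iff)
    ultimately show "\<exists>p. degree p \<le> d \<and> (\<forall>k\<le>d. ?moment p k = y k)" by blast
  next
    fix p p' assume p: "degree p \<le> d \<and> (\<forall>k\<le>d. ?moment p k = y k)"
      and p': "degree p' \<le> d \<and> (\<forall>k\<le>d. ?moment p' k = y k)"
    have "vec (d + 1) (coeff p) = x" by (rule x_unique) (use p solves_iff in auto)
    moreover have "vec (d + 1) (coeff p') = x" by (rule x_unique) (use p' solves_iff in auto)
    ultimately show "p = p'" using p p' poly_of_vec_coeff by metis
  qed
qed (simp_all add: finite_Mset weights_nonneg)

lemma submask_eq_Wmat_Xmat_iff: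
  assumes "\<alpha> \<in> carrier_vec (d + 1)"
  shows "submask lam a i = Wmat \<phi> lam i *\<^sub>v (Xmat lam d i *\<^sub>v \<alpha>)
     \<longleftrightarrow> (\<forall>m\<in>Mset lam i. a m = wt \<phi> lam m * poly (poly_of_vec \<alpha>) (of_int m))"
  unfolding Xmat_mult_vec[OF assms] Wmat_mult_vec submask_def
  by (auto simp: vec_eq_iff all_set_conv_all_nth simp flip: set_Mlist)

lemma admissible_mask_iff:
  "admissible_mask \<phi> lam d a \<longleftrightarrow> reproduces d (lin_scheme lam a) \<and>
     (\<forall>i\<in>{0, 1}. \<exists>r. degree r \<le> d \<and> (\<forall>m\<in>Mset lam i. a m = wt \<phi> lam m * poly r (of_int m)))"
proof -
  have "(\<exists>\<alpha>\<in>carrier_vec (d + 1). submask lam a i = Wmat \<phi> lam i *\<^sub>v (Xmat lam d i *\<^sub>v \<alpha>))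
      \<longleftrightarrow> (\<exists>r. degree r \<le> d \<and> (\<forall>m\<in>Mset lam i. a m = wt \<phi> lam m * poly r (of_int m)))" for i
  proof
    assume "\<exists>\<alpha>\<in>carrier_vec (d + 1). submask lam a i = Wmat \<phi> lam i *\<^sub>v (Xmat lam d i *\<^sub>v \<alpha>)"
    then show "\<exists>r. degree r \<le> d \<and> (\<forall>m\<in>Mset lam i. a m = wt \<phi> lam m * poly r (of_int m))"
      using submask_eq_Wmat_Xmat_iff degree_poly_of_vec by blast
  next
    assume "\<exists>r. degree r \<le> d \<and> (\<forall>m\<in>Mset lam i. a m = wt \<phi> lam m * poly r (of_int m))"
    then obtain r where "degree r \<le> d" "\<forall>m\<in>Mset lam i. a m = wt \<phi> lam m * poly r (of_int m)"
      by blast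
    then show "\<exists>\<alpha>\<in>carrier_vec (d + 1). submask lam a i = Wmat \<phi> lam i *\<^sub>v (Xmat lam d i *\<^sub>v \<alpha>)"
      using submask_eq_Wmat_Xmat_iff[of "vec (d + 1) (coeff r)"] poly_of_vec_coeff
      by (metis vec_carrier)
  qed
  then show ?thesis unfolding admissible_mask_def by simp
qed

lemma wlpr_eq_lsq_fit:
  assumes "poly_wls (Mset lam (k mod 2)) of_int (wt \<phi> lam) d"
  shows "wlpr \<phi> lam d f k = poly (poly_wls.lsq_fit (Mset lam (k mod 2)) of_int (wt \<phi> lam) d
      (\<lambda>m. f (k div 2 + (m + k mod 2) div 2))) 0"
  by (simp add: wlpr_def wls_obj_def poly_wls.lsq_fit_def[OF assms] poly_wls.lsq_error_def[OF assms] Let_def)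

lemma admissible_mask_lin_scheme_eq_wlpr:
  assumes wls: "\<And>i. i \<in> {0, 1} \<Longrightarrow> poly_wls (Mset lam i) of_int (wt \<phi> lam) d"
    and adm: "admissible_mask \<phi> lam d a"
  shows "lin_scheme lam a = wlpr \<phi> lam d"
proof (intro ext)
  fix f and k :: int
  have i: "k mod 2 \<in> {0, 1}" by auto
  interpret poly_wls "Mset lam (k mod 2)" of_int "wt \<phi> lam" d by (rule wls[OF i])
  have exact: "\<forall>i\<in>{0, 1}. exact_at_0 d (Mset lam i) of_int a"
    and weighted: "\<forall>i\<in>{0, 1}. \<exists>r. degree r \<le> d \<and> (\<forall>m\<in>Mset lam i. a m = wt \<phi> lam m * poly r (of_int m))"
    using adm unfolding admissible_mask_iff reproduces_lin_scheme_iff by auto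
  obtain r where "degree r \<le> d" "\<forall>m\<in>Mset lam (k mod 2). a m = wt \<phi> lam m * poly r (of_int m)"
    using bspec[OF weighted i] by blast
  moreover note bspec[OF exact i]
  ultimately show "lin_scheme lam a f k = wlpr \<phi> lam d f k"
    unfolding wlpr_eq_lsq_fit[OF wls[OF i]] by (simp add: poly_lsq_fit_0 lin_scheme_def Let_def)
qed

lemma admissible_mask_exists:
  assumes wls: "\<And>i. i \<in> {0, 1} \<Longrightarrow> poly_wls (Mset lam i) of_int (wt \<phi> lam) d"
  shows "\<exists>a. admissible_mask \<phi> lam d a"
proof -
  have "\<forall>i\<in>{0, 1}. \<exists>r. degree r \<le> d \<and> exact_at_0 d (Mset lam i) of_int (\<lambda>m. wt \<phi> lam m * poly r (of_int m))"
    using poly_wls.exact_weighted_rule_exists[OF wls] by blast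
  then obtain r where r: "\<And>i. i \<in> {0, 1} \<Longrightarrow>
      degree (r i) \<le> d \<and> exact_at_0 d (Mset lam i) of_int (\<lambda>m. wt \<phi> lam m * poly (r i) (of_int m))"
    by metis
  define a where "a m = wt \<phi> lam m * poly (r (m mod 2)) (of_int m)" for m
  have a_on: "a m = wt \<phi> lam m * poly (r i) (of_int m)" if "m \<in> Mset lam i" for i m
    using Mset_mod[OF that] by (simp add: a_def)
  have "admissible_mask \<phi> lam d a"
    unfolding admissible_mask_iff reproduces_lin_scheme_iff
  proof (intro conjI ballI)
    fix i :: int assume i: "i \<in> {0, 1}"
    show "exact_at_0 d (Mset lam i) of_int a"
      using r[OF i] exact_at_0_cong[of "Mset lam i" a] a_on by simp
    show "\<exists>r. degree r \<le> d \<and> (\<forall>m\<in>Mset lam i. a m = wt \<phi> lam m * poly r (of_int m))"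
      using r[OF i] a_on by blast
  qed
  then show ?thesis by blast
qed

theorem theorem3p4:
  fixes \<phi> :: "real \<Rightarrow> real" and lam :: real and d :: nat
  assumes phi_range: "\<And>x. 0 \<le> x \<Longrightarrow> x \<le> 1 \<Longrightarrow> 0 \<le> \<phi> x \<and> \<phi> x \<le> 1"
    and phi_mono: "\<And>x y. 0 \<le> x \<Longrightarrow> x \<le> y \<Longrightarrow> y \<le> 1 \<Longrightarrow> \<phi> y \<le> \<phi> x"
    and phi0: "\<phi> 0 = 1"
    and lam_pos: "0 < lam"
    and lam_not_nat: "lam \<notin> \<nat>"
    and inv: "\<And>i. i \<in> {0, 1} \<Longrightarrow>
       invertible_mat (transpose_mat (Xmat lam d i) * Wmat \<phi> lam i * Xmat lam d i)"
  shows "(\<exists>a. admissible_mask \<phi> lam d a \<and> lin_scheme lam a = wlpr \<phi> lam d) \<and>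
         (\<forall>a. admissible_mask \<phi> lam d a \<longrightarrow> lin_scheme lam a = wlpr \<phi> lam d)"
proof -
  have "\<And>m. 0 \<le> wt \<phi> lam m" using phi_range by (simp add: wt_def omega_def)
  then have wls: "\<And>i. i \<in> {0, 1} \<Longrightarrow> poly_wls (Mset lam i) of_int (wt \<phi> lam) d"
    using poly_wls_Mset inv by blast
  show ?thesis
    using admissible_mask_exists[OF wls] admissible_mask_lin_scheme_eq_wlpr[OF wls] by blast
qed

end
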